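(* Let $\nu\ge1$, $d:\mathbb{Z}^\nu\to\mathbb{C}$ bounded, $J=J_0+D$ on $\ell^2(\mathbb{Z}^\nu)$. Suppose that for some $j\in\{1,\dots,\nu\}$, $$\sup_{(k_1,\dots,k_{j-1},k_{j+1},\dots,k_\nu)\in\mathbb{Z}^{\nu-1}}\big|\Im\big(d(k_1,\dots,k_{j-1},n,k_{j+1},\dots,k_\nu)\big)\big|\to0$$ as $n\to+\infty$ (or as $n\to-\infty$). (For $\nu=1$ this means $\Im(d(n))\to0$ as $n\to+\infty$, or as $n\to-\infty$.) Then every boundary eigenvalue of $J$ is real.
   Context: $J_0$ is the discrete Laplacian on $\ell^2(\mathbb{Z}^\nu)$: $(J_0u)(k)=\sum_{l\in\mathbb{Z}^\nu:\|l\|_1=1}u(k+l)$, $\|l\|_1=\sum_j|l_j|$. $D$ is multiplication by $d$. The numerical range is $\operatorname{Num}(J)=\{\langle Ju,u\rangle:\|u\|=1\}$, and a boundary eigenvalue of $J$ is an eigenvalue of $J$ lying in the topological boundary of $\operatorname{Num}(J)$. *)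

theory Defs
  imports "HOL-Analysis.Analysis"
begin

text \<open>Lattice points of Z^nu are vectors int^'n, with 'n a finite index type (CARD('n) = nu >= 1).
  Sequences on Z^nu are functions int^'n => complex.\<close>

definition l2 :: "('a \<Rightarrow> complex) set" where
  "l2 = {u. (\<lambda>k. (cmod (u k))^2) summable_on UNIV}"

definition l2norm :: "('a \<Rightarrow> complex) \<Rightarrow> real" where
  "l2norm u = sqrt (infsum (\<lambda>k. (cmod (u k))^2) UNIV)"

definition l2inner :: "('a \<Rightarrow> complex) \<Rightarrow> ('a \<Rightarrow> complex) \<Rightarrow> complex" where
  "l2inner u v = infsum (\<lambda>k. u k * cnj (v k)) UNIV"

definition J0 :: "(int^'n \<Rightarrow> complex) \<Rightarrow> int^'n \<Rightarrow> complex" where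
  "J0 u k = (\<Sum>l\<in>{l :: int^'n. (\<Sum>i\<in>UNIV. \<bar>l $ i\<bar>) = 1}. u (k + l))"

definition jacobi :: "(int^'n \<Rightarrow> complex) \<Rightarrow> (int^'n \<Rightarrow> complex) \<Rightarrow> int^'n \<Rightarrow> complex" where
  "jacobi d u k = J0 u k + d k * u k"

definition numrange :: "(int^'n \<Rightarrow> complex) \<Rightarrow> complex set" where
  "numrange d = {l2inner (jacobi d u) u | u. u \<in> l2 \<and> l2norm u = 1}"

definition is_eigenvalue :: "(int^'n \<Rightarrow> complex) \<Rightarrow> complex \<Rightarrow> bool" where
  "is_eigenvalue d z \<longleftrightarrow> (\<exists>u\<in>l2. u \<noteq> (\<lambda>_. 0) \<and> jacobi d u = (\<lambda>k. z * u k))"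

definition boundary_eigenvalue :: "(int^'n \<Rightarrow> complex) \<Rightarrow> complex \<Rightarrow> bool" where
  "boundary_eigenvalue d z \<longleftrightarrow> is_eigenvalue d z \<and> z \<in> frontier (numrange d)"

end

theory Submission
  imports Defs
begin

text \<open>
  Let \<open>J u = z u\<close> with \<open>u \<noteq> 0\<close>. Perturbing \<open>u\<close> along a unit vector \<open>\<delta>\<^sub>k\<close> gives
  \<open>\<langle>J(u + t\<delta>\<^sub>k), u + t\<delta>\<^sub>k\<rangle> = z \<parallel>u + t\<delta>\<^sub>k\<parallel>\<^sup>2 + t a + |t|\<^sup>2 b\<close> with
  \<open>a = 2 i (Im (d k) - Im z) cnj (u k)\<close>. If \<open>a \<noteq> 0\<close>, a Brouwer fixed point argument solves
  \<open>t a + |t|\<^sup>2 b = e \<parallel>u + t\<delta>\<^sub>k\<parallel>\<^sup>2\<close> for all small \<open>e\<close>, so a whole disc around \<open>z\<close> consists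
  of Rayleigh quotients and \<open>z\<close> is interior to the numerical range. Hence a boundary
  eigenvalue satisfies \<open>Im (d k) = Im z\<close> wherever \<open>u k \<noteq> 0\<close>. If \<open>Im z \<noteq> 0\<close>, the decay
  hypothesis makes \<open>u\<close> vanish on a coordinate half-space, and a unique continuation
  property of the discrete Laplacian then forces \<open>u = 0\<close>, a contradiction.
\<close>

definition nbr :: "(int^'n) set" where
  "nbr = {l. (\<Sum>i\<in>UNIV. \<bar>l $ i\<bar>) = 1}"

lemma J0_nbr: "J0 u k = (\<Sum>l\<in>nbr. u (k + l))"
  by (simp add: J0_def nbr_def)

lemma nbr_component_le: "l \<in> nbr \<Longrightarrow> \<bar>l $ i\<bar> \<le> 1"
  using member_le_sum[of i UNIV "\<lambda>i. \<bar>l $ i\<bar>"] by (simp add: nbr_def)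

lemma finite_nbr: "finite (nbr :: (int^'n) set)"
proof -
  let ?cube = "PiE (UNIV::'n set) (\<lambda>_. {-1..1::int})"
  have "nbr \<subseteq> (\<lambda>f. \<chi> i. f i) ` ?cube"
  proof
    fix l :: "int^'n" assume "l \<in> nbr"
    hence "(\<lambda>i. l $ i) \<in> ?cube"
      using nbr_component_le by (auto simp: abs_le_iff)
    thus "l \<in> (\<lambda>f. \<chi> i. f i) ` ?cube" by (intro image_eqI[of _ _ "\<lambda>i. l $ i"]) auto
  qed
  thus ?thesis by (rule finite_subset) (intro finite_imageI finite_PiE; simp)
qed

lemma zero_notin_nbr: "0 \<notin> nbr"
  by (simp add: nbr_def)

lemma uminus_nbr: "l \<in> nbr \<Longrightarrow> - l \<in> nbr"
  by (simp add: nbr_def)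

lemma axis_nbr: "\<bar>s\<bar> = 1 \<Longrightarrow> axis j (s::int) \<in> nbr"
proof -
  assume s: "\<bar>s\<bar> = 1"
  have "(\<Sum>i\<in>UNIV. \<bar>axis j s $ i\<bar>) = (\<Sum>i\<in>UNIV. if i = j then 1 else 0)"
    by (rule sum.cong) (auto simp: axis_def s)
  thus ?thesis by (simp add: nbr_def)
qed

lemma nbr_axis:
  assumes l: "l \<in> nbr" and lj: "\<bar>l $ j\<bar> = 1"
  shows "l = axis j (l $ j)"
proof -
  have "(\<Sum>i\<in>UNIV. \<bar>l $ i\<bar>) = \<bar>l $ j\<bar> + (\<Sum>i\<in>UNIV - {j}. \<bar>l $ i\<bar>)"
    by (simp add: sum.remove)
  hence "(\<Sum>i\<in>UNIV - {j}. \<bar>l $ i\<bar>) = 0" using l lj by (simp add: nbr_def)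
  hence "\<forall>i\<in>UNIV - {j}. l $ i = 0"
    by (subst (asm) sum_nonneg_eq_0_iff) auto
  thus ?thesis by (auto simp: vec_eq_iff axis_def)
qed

lemma nbr_inward:
  assumes l: "l \<in> nbr" and s: "\<bar>s\<bar> = (1::int)" and ne: "l \<noteq> - axis j s"
  shows "s * l $ j \<ge> 0"
proof (rule ccontr)
  assume neg: "\<not> s * l $ j \<ge> 0"
  have "\<bar>s * l $ j\<bar> \<le> 1" using nbr_component_le[OF l] s by (simp add: abs_mult)
  hence "s * l $ j = -1" using neg by linarith
  moreover have "s = 1 \<or> s = -1" using s by arith
  ultimately have lj: "l $ j = - s" by auto
  hence "l = axis j (- s)" using nbr_axis[OF l, of j] s by simp
  also have "\<dots> = - axis j s" by (simp add: vec_eq_iff axis_def)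
  finally show False using ne by simp
qed

section \<open>Unique continuation from a half-space\<close>

text \<open>A solution of \<open>J0 u = c u\<close> (for an arbitrary potential \<open>c\<close>) that vanishes on a
  coordinate half-space vanishes identically: the equation at a boundary point of the
  zero set expresses the value of \<open>u\<close> one step further out as a sum of zeros.\<close>
lemma unique_continuation_halfspace:
  fixes u :: "int^'n \<Rightarrow> complex"
  assumes eq: "\<And>k. J0 u k = c k * u k" and s: "\<bar>s\<bar> = (1::int)"
    and zero: "\<And>k. s * k $ j \<ge> N \<Longrightarrow> u k = 0"
  shows "u k = 0"
proof -
  have ss: "s * s = 1" using s abs_mult_self_eq[of s] by simp
  have layer: "\<forall>k. s * k $ j \<ge> N - int p \<longrightarrow> u k = 0" for p
  proof (induction p)
    case 0
    then show ?case using zero by simp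
  next
    case (Suc p)
    show ?case
    proof (intro allI impI)
      fix k :: "int^'n" assume k: "s * k $ j \<ge> N - int (Suc p)"
      show "u k = 0"
      proof (cases "s * k $ j \<ge> N - int p")
        case True
        then show ?thesis using Suc.IH by blast
      next
        case False
        define k' where "k' = k + axis j s"
        have k'j: "s * k' $ j = N - int p"
          using False k ss by (simp add: k'_def axis_def algebra_simps)
        have outward: "- axis j s \<in> nbr" using axis_nbr[OF s] uminus_nbr by blast
        have others: "u (k' + l) = 0" if "l \<in> nbr - {- axis j s}" for l
          using nbr_inward[of l s j] that s k'j Suc.IH by (auto simp: algebra_simps)
        have "J0 u k' = u (k' + - axis j s) + (\<Sum>l\<in>nbr - {- axis j s}. u (k' + l))"
          unfolding J0_nbr by (rule sum.remove[OF finite_nbr outward])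
        also have "\<dots> = u k" using others by (simp add: k'_def)
        finally show ?thesis using eq[of k'] Suc.IH k'j by simp
      qed
    qed
  qed
  show ?thesis using layer[of "nat (N - s * k $ j)"] by auto
qed

section \<open>Rank-one perturbations of an eigenvector\<close>

definition delta :: "'a \<Rightarrow> 'a \<Rightarrow> complex" where
  "delta k m = (if m = k then 1 else 0)"

lemma cnj_delta [simp]: "cnj (delta k m) = delta k m"
  by (simp add: delta_def)

lemma has_sum_delta: "((\<lambda>m. f m * delta k m) has_sum f k) UNIV"
  by (rule has_sum_finite_neutralI[of "{k}"]) (auto simp: delta_def)

lemma jacobi_add_scaled:
  "jacobi d (\<lambda>m. x m + c * y m) = (\<lambda>m. jacobi d x m + c * jacobi d y m)"
  by (simp add: fun_eq_iff jacobi_def J0_nbr sum.distrib sum_distrib_left algebra_simps)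

lemma jacobi_scaled: "jacobi d (\<lambda>m. c * y m) = (\<lambda>m. c * jacobi d y m)"
  by (simp add: fun_eq_iff jacobi_def J0_nbr sum_distrib_left algebra_simps)

lemma J0_reflected: "(\<Sum>l\<in>nbr. u (k - l)) = J0 u k"
  unfolding J0_nbr
  by (rule sum.reindex_bij_witness[of _ uminus uminus]) (auto simp: uminus_nbr)

lemma J0_delta: "J0 (delta k) m = (if k - m \<in> nbr then 1 else 0)"
proof -
  have "J0 (delta k) m = (\<Sum>l\<in>nbr. if l = k - m then 1 else 0)"
    unfolding J0_nbr delta_def by (rule sum.cong) (auto simp: eq_diff_eq add.commute)
  thus ?thesis using sum.delta[OF finite_nbr, of "k - m" "\<lambda>_. 1::complex"] by simp
qed

text \<open>The matrix element \<open>\<langle>J \<delta>\<^sub>k, u\<rangle>\<close> equals \<open>\<langle>\<delta>\<^sub>k, J\<^sup>* u\<rangle>\<close>, where \<open>J\<^sup>*\<close> has the conjugate potential;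
  the sum is finite since \<open>J \<delta>\<^sub>k\<close> is supported on \<open>k\<close> and its neighbours.\<close>
lemma jacobi_delta_pairing:
  fixes k :: "int^'n"
  shows "((\<lambda>m. jacobi d (delta k) m * cnj (u m)) has_sum (cnj (J0 u k) + d k * cnj (u k))) UNIV"
proof (rule has_sum_finite_neutralI)
  let ?G = "(\<lambda>l. k - l) ` nbr"
  have k_notin: "k \<notin> ?G" using zero_notin_nbr by auto
  have Jdelta: "jacobi d (delta k) m = (if k - m \<in> nbr then 1 else 0) + d m * delta k m" for m
    by (simp add: jacobi_def J0_delta)
  show "finite (insert k ?G)" using finite_nbr by blast
  show "jacobi d (delta k) m * cnj (u m) = 0" if m: "m \<in> UNIV - insert k ?G" for m
  proof -
    have "k - m \<notin> nbr"
    proof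
      assume "k - m \<in> nbr"
      hence "m \<in> ?G" by (intro image_eqI[of _ _ "k - m"]) auto
      thus False using m by blast
    qed
    thus ?thesis using m by (simp add: Jdelta delta_def)
  qed
  have "(\<Sum>m\<in>?G. jacobi d (delta k) m * cnj (u m)) = (\<Sum>l\<in>nbr. jacobi d (delta k) (k - l) * cnj (u (k - l)))"
    by (simp add: sum.reindex inj_on_def)
  also have "\<dots> = (\<Sum>l\<in>nbr. cnj (u (k - l)))"
  proof (rule sum.cong)
    fix l :: "int^'n" assume "l \<in> nbr"
    moreover from this have "k - l \<noteq> k" using zero_notin_nbr by auto
    ultimately show "jacobi d (delta k) (k - l) * cnj (u (k - l)) = cnj (u (k - l))"
      by (simp add: Jdelta delta_def)
  qed simp
  also have "\<dots> = cnj (J0 u k)" by (simp flip: J0_reflected)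
  finally have "(\<Sum>m\<in>?G. jacobi d (delta k) m * cnj (u m)) = cnj (J0 u k)" .
  moreover have "finite ?G" using finite_nbr by blast
  ultimately show "cnj (J0 u k) + d k * cnj (u k) = (\<Sum>m\<in>insert k ?G. jacobi d (delta k) m * cnj (u m))"
    using k_notin by (simp add: Jdelta delta_def zero_notin_nbr)
qed simp

lemma perturbed_norm:
  assumes u: "((\<lambda>m. (cmod (u m))\<^sup>2) has_sum A) UNIV"
  shows "((\<lambda>m. (cmod (u m + t * delta k m))\<^sup>2) has_sum (A + 2 * Re (cnj t * u k) + (cmod t)\<^sup>2)) UNIV"
proof -
  have square: "(cmod (x + y))\<^sup>2 = (cmod x)\<^sup>2 + 2 * Re (cnj y * x) + (cmod y)\<^sup>2" for x y
    unfolding cmod_power2 by (simp add: power2_eq_square algebra_simps)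
  have expand: "(cmod (u m + t * delta k m))\<^sup>2
      = (cmod (u m))\<^sup>2 + (2 * Re (cnj t * u m) + (cmod t)\<^sup>2) * Re (delta k m)" for m
    by (simp add: delta_def square)
  have "((\<lambda>m. (2 * Re (cnj t * u m) + (cmod t)\<^sup>2) * Re (delta k m))
           has_sum (2 * Re (cnj t * u k) + (cmod t)\<^sup>2)) UNIV"
    by (rule has_sum_finite_neutralI[of "{k}"]) (auto simp: delta_def)
  from has_sum_add[OF u this] show ?thesis unfolding expand by (simp add: add.assoc)
qed

lemma perturbed_rayleigh:
  fixes t :: complex and k :: "int^'n"
  assumes u: "((\<lambda>m. (cmod (u m))\<^sup>2) has_sum A) UNIV"
    and eig: "jacobi d u = (\<lambda>m. z * u m)"
  defines "v \<equiv> \<lambda>m. u m + t * delta k m"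
  shows "l2inner (jacobi d v) v
       = z * of_real (A + 2 * Re (cnj t * u k) + (cmod t)\<^sup>2)
         + t * (cnj (u k) * ((d k - cnj (d k)) - (z - cnj z))) + of_real ((cmod t)\<^sup>2) * (d k - z)"
proof -
  let ?T = "jacobi d (delta k)"
  have Jv: "jacobi d v m = z * u m + t * ?T m" for m
    unfolding v_def jacobi_add_scaled eig ..
  have expand: "jacobi d v m * cnj (v m)
      = z * of_real ((cmod (u m))\<^sup>2) + (z * cnj t) * (u m * delta k m)
        + t * (?T m * cnj (u m)) + (t * cnj t) * (?T m * delta k m)" for m
    unfolding Jv unfolding v_def complex_norm_square by (simp add: algebra_simps)
  have Tk: "?T k = d k" by (simp add: jacobi_def J0_delta zero_notin_nbr delta_def)
  have T_delta: "((\<lambda>m. ?T m * delta k m) has_sum d k) UNIV"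
    using has_sum_delta[of ?T k] Tk by simp
  have J0u: "J0 u k = (z - d k) * u k"
    using fun_cong[OF eig, of k] by (simp add: jacobi_def algebra_simps)
  have "((\<lambda>m. jacobi d v m * cnj (v m)) has_sum
          (z * of_real A + (z * cnj t) * u k + t * (cnj (J0 u k) + d k * cnj (u k))
           + (t * cnj t) * d k)) UNIV"
    unfolding expand
    by (intro has_sum_add has_sum_cmult_right has_sum_of_real[OF u] has_sum_delta
        jacobi_delta_pairing T_delta)
  hence "l2inner (jacobi d v) v
      = z * of_real A + (z * cnj t) * u k + t * (cnj (J0 u k) + d k * cnj (u k)) + (t * cnj t) * d k"
    unfolding l2inner_def by (rule infsumI)
  also have "\<dots> = z * of_real (A + 2 * Re (cnj t * u k) + (cmod t)\<^sup>2)
         + t * (cnj (u k) * ((d k - cnj (d k)) - (z - cnj z))) + of_real ((cmod t)\<^sup>2) * (d k - z)"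
  proof -
    have "complex_of_real (2 * Re (cnj t * u k)) = cnj t * u k + t * cnj (u k)"
      using complex_add_cnj[of "cnj t * u k"] by simp
    thus ?thesis unfolding J0u of_real_add complex_norm_square by (simp add: algebra_simps)
  qed
  finally show ?thesis .
qed

lemma rayleigh_quotient_in_numrange:
  assumes v: "((\<lambda>m. (cmod (v m))\<^sup>2) has_sum D) UNIV" and D: "D > 0"
  shows "l2inner (jacobi d v) v / of_real D \<in> numrange d"
proof -
  define c where "c = 1 / sqrt D"
  have c2: "c\<^sup>2 * D = 1" using D by (simp add: c_def power_divide)
  define y where "y = (\<lambda>m. of_real c * v m)"
  have ysq: "(cmod (y m))\<^sup>2 = c\<^sup>2 * (cmod (v m))\<^sup>2" for m
    by (simp add: y_def norm_mult power_mult_distrib)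
  have y_sum: "((\<lambda>m. (cmod (y m))\<^sup>2) has_sum 1) UNIV"
    using has_sum_cmult_right[OF v, of "c\<^sup>2"] unfolding ysq c2 .
  have "y \<in> l2" using y_sum by (auto simp: l2_def summable_on_def)
  moreover have "l2norm y = 1" using infsumI[OF y_sum] by (simp add: l2norm_def)
  ultimately have "l2inner (jacobi d y) y \<in> numrange d" unfolding numrange_def by blast
  moreover have "l2inner (jacobi d y) y = l2inner (jacobi d v) v / of_real D"
  proof -
    have "jacobi d y m * cnj (y m) = of_real (c\<^sup>2) * (jacobi d v m * cnj (v m))" for m
      unfolding y_def jacobi_scaled by (simp add: power2_eq_square)
    hence "l2inner (jacobi d y) y = of_real (c\<^sup>2) * l2inner (jacobi d v) v"
      unfolding l2inner_def by (simp add: infsum_cmult_right')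
    also have "c\<^sup>2 = 1 / D" using c2 D by (simp add: eq_divide_eq)
    finally show ?thesis by (simp add: field_simps)
  qed
  ultimately show ?thesis by simp
qed

section \<open>Eigenvectors away from the boundary of the numerical range\<close>

lemma quadratic_term_small:
  fixes a b t :: complex
  assumes t: "cmod t \<le> r" and rb: "r * cmod b \<le> cmod a / 2"
  shows "cmod (of_real ((cmod t)\<^sup>2) * b) \<le> cmod t * (cmod a / 2)"
proof -
  have "cmod (of_real ((cmod t)\<^sup>2) * b) = cmod t * (cmod t * cmod b)"
    by (simp add: norm_mult power2_eq_square)
  also have "\<dots> \<le> cmod t * (cmod a / 2)"
  proof (rule mult_left_mono)
    show "cmod t * cmod b \<le> cmod a / 2"
      using mult_right_mono[OF t norm_ge_zero[of b]] rb by linarith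
  qed simp
  finally show ?thesis .
qed

text \<open>Brouwer's fixed point theorem applied to \<open>t \<mapsto> (e D(t) - |t|\<^sup>2 b) / a\<close>, which maps the
  disc of radius \<open>r\<close> into itself when \<open>e\<close> is small, solves \<open>t a + |t|\<^sup>2 b = e D(t)\<close>;
  the solution has \<open>D(t) > 0\<close> because \<open>D(t) = 0\<close> would force \<open>t = 0\<close>.\<close>
lemma perturbation_equation_fixed_point:
  fixes a b e :: complex and D :: "complex \<Rightarrow> real"
  assumes a: "a \<noteq> 0" and r: "r > 0" and rb: "r * cmod b \<le> cmod a / 2"
    and D_cont: "continuous_on (cball 0 r) D" and D_nonneg: "\<And>t. D t \<ge> 0" and D0: "D 0 > 0"
    and eK: "\<And>t. cmod t \<le> r \<Longrightarrow> cmod e * \<bar>D t\<bar> \<le> r * (cmod a / 2)"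
  shows "\<exists>t. D t > 0 \<and> t * a + of_real ((cmod t)\<^sup>2) * b = e * of_real (D t)"
proof -
  define f where "f t = (e * of_real (D t) - of_real ((cmod t)\<^sup>2) * b) / a" for t
  have "f \<in> cball 0 r \<rightarrow> cball 0 r"
  proof
    fix t :: complex assume "t \<in> cball 0 r"
    hence t: "cmod t \<le> r" by simp
    have "cmod (e * of_real (D t) - of_real ((cmod t)\<^sup>2) * b)
        \<le> cmod (e * of_real (D t)) + cmod (of_real ((cmod t)\<^sup>2) * b)"
      by (rule norm_triangle_ineq4)
    also have "cmod (e * of_real (D t)) \<le> r * (cmod a / 2)"
      using eK[OF t] by (simp add: norm_mult)
    also have "cmod (of_real ((cmod t)\<^sup>2) * b) \<le> r * (cmod a / 2)"
      using quadratic_term_small[OF t rb] mult_right_mono[OF t, of "cmod a / 2"] by simp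
    finally have "cmod (e * of_real (D t) - of_real ((cmod t)\<^sup>2) * b) \<le> r * cmod a"
      by simp
    thus "f t \<in> cball 0 r" using a by (simp add: f_def norm_divide divide_le_eq)
  qed
  moreover have "continuous_on (cball 0 r) f"
    using D_cont unfolding f_def by (intro continuous_intros) (auto simp: a)
  ultimately obtain t where t: "cmod t \<le> r" "f t = t"
    using brouwer_ball[OF r] by (metis mem_cball_0)
  have eq: "t * a + of_real ((cmod t)\<^sup>2) * b = e * of_real (D t)"
    using t(2) a unfolding f_def by (simp add: field_simps)
  have "D t > 0"
  proof (rule ccontr)
    assume "\<not> D t > 0"
    hence "D t = 0" using D_nonneg[of t] by simp
    hence "t * a = - (of_real ((cmod t)\<^sup>2) * b)"
      using eq by (simp add: eq_neg_iff_add_eq_0)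
    hence "cmod t * cmod a = cmod (of_real ((cmod t)\<^sup>2) * b)"
      by (metis norm_minus_cancel norm_mult)
    also have "\<dots> \<le> cmod t * (cmod a / 2)" by (rule quadratic_term_small[OF t(1) rb])
    finally have "cmod t * cmod a \<le> 0" by (simp add: mult.commute)
    hence "t = 0" using a by (simp add: mult_le_0_iff)
    thus False using \<open>D t = 0\<close> D0 by simp
  qed
  with eq show ?thesis by blast
qed

text \<open>Solvability of \<open>t a + |t|\<^sup>2 b = e D(t)\<close> with \<open>D(t) > 0\<close> for all small \<open>e\<close>: choose the
  disc radius \<open>r\<close> so that the linear term dominates, then bound \<open>D\<close> on the disc by compactness.\<close>
lemma perturbation_equation_solvable:
  fixes a b :: complex and D :: "complex \<Rightarrow> real"
  assumes a: "a \<noteq> 0" and D_cont: "continuous_on UNIV D"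
    and D_nonneg: "\<And>t. D t \<ge> 0" and D0: "D 0 > 0"
  shows "\<exists>\<epsilon>>0. \<forall>e. cmod e < \<epsilon> \<longrightarrow>
           (\<exists>t. D t > 0 \<and> t * a + of_real ((cmod t)\<^sup>2) * b = e * of_real (D t))"
proof -
  define r where "r = min 1 (cmod a / (2 * (cmod b + 1)))"
  have b1: "cmod b + 1 > 0" using norm_ge_zero[of b] by linarith
  hence q: "cmod a / (2 * (cmod b + 1)) > 0" using a by simp
  hence r: "r > 0" by (auto simp: r_def)
  have rb: "r * cmod b \<le> cmod a / 2"
  proof -
    have "r * cmod b \<le> cmod a / (2 * (cmod b + 1)) * (cmod b + 1)"
      using q by (intro mult_mono) (auto simp: r_def)
    also have "\<dots> = cmod a / 2" using b1 by (simp add: field_simps)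
    finally show ?thesis .
  qed
  have D_cont_r: "continuous_on (cball 0 r) D" using continuous_on_subset[OF D_cont] by blast
  hence "compact (D ` cball 0 r)" by (intro compact_continuous_image) auto
  then obtain K where K: "K > 0" "\<And>t. cmod t \<le> r \<Longrightarrow> \<bar>D t\<bar> \<le> K"
    by (auto dest!: compact_imp_bounded simp: bounded_pos)
  define \<epsilon> where "\<epsilon> = r * cmod a / (2 * K)"
  have "\<epsilon> > 0" using r a K by (simp add: \<epsilon>_def)
  moreover have "cmod e * \<bar>D t\<bar> \<le> r * (cmod a / 2)" if "cmod e < \<epsilon>" "cmod t \<le> r" for e t
  proof -
    have "cmod e * \<bar>D t\<bar> \<le> \<epsilon> * K"
      using that K(2) \<open>\<epsilon> > 0\<close> by (intro mult_mono) auto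
    also have "\<epsilon> * K = r * (cmod a / 2)" using K by (simp add: \<epsilon>_def)
    finally show ?thesis .
  qed
  ultimately show ?thesis
    using perturbation_equation_fixed_point[OF a r rb D_cont_r D_nonneg D0] by blast
qed

text \<open>If an eigenvector does not vanish at a point where \<open>Im d\<close> differs from the imaginary part
  of the eigenvalue, then the eigenvalue is an interior point of the numerical range:
  the linear term of the perturbed Rayleigh form is then nondegenerate.\<close>
lemma eigenvalue_interior:
  assumes u: "u \<in> l2" and eig: "jacobi d u = (\<lambda>m. z * u m)"
    and uk: "u k \<noteq> 0" and im: "Im (d k) \<noteq> Im z"
  shows "z \<in> interior (numrange d)"
proof -
  define A where "A = infsum (\<lambda>m. (cmod (u m))\<^sup>2) UNIV"
  have hsA: "((\<lambda>m. (cmod (u m))\<^sup>2) has_sum A) UNIV"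
    using u by (simp add: A_def l2_def)
  have "(cmod (u k))\<^sup>2 \<le> A"
    using has_sum_mono_neutral[OF has_sum_finite[of "{k}" "\<lambda>m. (cmod (u m))\<^sup>2"] hsA] by simp
  hence A: "A > 0" using uk by (smt (verit) zero_less_power2 norm_eq_zero)
  define D where "D t = A + 2 * Re (cnj t * u k) + (cmod t)\<^sup>2" for t
  define a where "a = cnj (u k) * ((d k - cnj (d k)) - (z - cnj z))"
  have D_sum: "((\<lambda>m. (cmod (u m + t * delta k m))\<^sup>2) has_sum D t) UNIV" for t
    unfolding D_def by (rule perturbed_norm[OF hsA])
  have "a \<noteq> 0"
  proof -
    have "Im ((d k - cnj (d k)) - (z - cnj z)) = 2 * (Im (d k) - Im z)" by simp
    hence "Im ((d k - cnj (d k)) - (z - cnj z)) \<noteq> 0" using im by simp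
    hence "(d k - cnj (d k)) - (z - cnj z) \<noteq> 0" by (metis zero_complex.sel(2))
    thus ?thesis using uk by (simp add: a_def)
  qed
  moreover have "continuous_on UNIV D" unfolding D_def by (intro continuous_intros)
  moreover have "D t \<ge> 0" for t using has_sum_nonneg[OF D_sum] by simp
  ultimately obtain \<epsilon> where \<epsilon>: "\<epsilon> > 0" and solve: "\<And>e. cmod e < \<epsilon> \<Longrightarrow>
      \<exists>t. D t > 0 \<and> t * a + of_real ((cmod t)\<^sup>2) * (d k - z) = e * of_real (D t)"
    using perturbation_equation_solvable[of a D "d k - z"] A by (auto simp: D_def)
  have "ball z \<epsilon> \<subseteq> numrange d"
  proof
    fix w assume "w \<in> ball z \<epsilon>"
    then obtain t where Dt: "D t > 0"
      and t: "t * a + of_real ((cmod t)\<^sup>2) * (d k - z) = (w - z) * of_real (D t)"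
      using solve[of "w - z"] by (auto simp: dist_norm norm_minus_commute)
    let ?v = "\<lambda>m. u m + t * delta k m"
    have "l2inner (jacobi d ?v) ?v = z * of_real (D t) + (w - z) * of_real (D t)"
      using perturbed_rayleigh[OF hsA eig, of t k] t by (simp add: D_def a_def add.assoc)
    hence "w = l2inner (jacobi d ?v) ?v / of_real (D t)" using Dt by (simp add: field_simps)
    thus "w \<in> numrange d" using rayleigh_quotient_in_numrange[OF D_sum Dt] by simp
  qed
  with \<epsilon> show ?thesis by (auto simp: mem_interior)
qed

lemma small_imaginary_part_on_halfspace:
  fixes d :: "int^'n \<Rightarrow> complex"
  assumes bdd: "bounded (range d)"
    and lim: "((\<lambda>n::int. SUP k\<in>{k :: int^'n. k $ j = n}. \<bar>Im (d k)\<bar>) \<longlongrightarrow> 0) at_top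
           \<or> ((\<lambda>n::int. SUP k\<in>{k :: int^'n. k $ j = n}. \<bar>Im (d k)\<bar>) \<longlongrightarrow> 0) at_bot"
    and \<epsilon>: "\<epsilon> > 0"
  shows "\<exists>s N. \<bar>s\<bar> = (1::int) \<and> (\<forall>k. s * k $ j \<ge> N \<longrightarrow> \<bar>Im (d k)\<bar> < \<epsilon>)"
proof -
  let ?S = "\<lambda>n::int. SUP k\<in>{k :: int^'n. k $ j = n}. \<bar>Im (d k)\<bar>"
  obtain B where B: "\<And>k. cmod (d k) \<le> B" using bdd by (auto simp: bounded_iff)
  have "bdd_above ((\<lambda>k. \<bar>Im (d k)\<bar>) ` S)" for S
    using B abs_Im_le_cmod order.trans by (intro bdd_aboveI2) blast
  hence slice: "\<bar>Im (d k)\<bar> \<le> ?S (k $ j)" for k by (intro cSUP_upper) auto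
  from lim show ?thesis
  proof
    assume "(?S \<longlongrightarrow> 0) at_top"
    from order_tendstoD(2)[OF this \<epsilon>] obtain N where "\<And>n. n \<ge> N \<Longrightarrow> ?S n < \<epsilon>"
      by (auto simp: eventually_at_top_linorder)
    hence "\<forall>k. 1 * k $ j \<ge> N \<longrightarrow> \<bar>Im (d k)\<bar> < \<epsilon>" using slice by (auto intro: le_less_trans)
    thus ?thesis by (intro exI[of _ 1] exI[of _ N]) simp
  next
    assume "(?S \<longlongrightarrow> 0) at_bot"
    from order_tendstoD(2)[OF this \<epsilon>] obtain N where "\<And>n. n \<le> N \<Longrightarrow> ?S n < \<epsilon>"
      by (auto simp: eventually_at_bot_linorder)
    hence "\<forall>k. (-1) * k $ j \<ge> - N \<longrightarrow> \<bar>Im (d k)\<bar> < \<epsilon>" using slice by (auto intro: le_less_trans)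
    thus ?thesis by (intro exI[of _ "-1"] exI[of _ "-N"]) simp
  qed
qed

theorem mainTheorem6:
  fixes d :: "int^'n \<Rightarrow> complex" and z :: complex
  assumes "bounded (range d)"
    and "\<exists>j. ((\<lambda>n::int. SUP k\<in>{k :: int^'n. k $ j = n}. \<bar>Im (d k)\<bar>) \<longlongrightarrow> 0) at_top
           \<or> ((\<lambda>n::int. SUP k\<in>{k :: int^'n. k $ j = n}. \<bar>Im (d k)\<bar>) \<longlongrightarrow> 0) at_bot"
    and "boundary_eigenvalue d z"
  shows "z \<in> \<real>"
proof (rule ccontr)
  assume "z \<notin> \<real>"
  hence Imz: "\<bar>Im z\<bar> > 0" by (simp add: complex_is_Real_iff)
  from assms(3) obtain u where u: "u \<in> l2" "u \<noteq> (\<lambda>_. 0)" and eig: "jacobi d u = (\<lambda>k. z * u k)"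
    and not_interior: "z \<notin> interior (numrange d)"
    unfolding boundary_eigenvalue_def is_eigenvalue_def frontier_def by blast
  obtain j s N where s: "\<bar>s\<bar> = (1::int)" and small: "\<And>k. s * k $ j \<ge> N \<Longrightarrow> \<bar>Im (d k)\<bar> < \<bar>Im z\<bar>"
    using assms(2) small_imaginary_part_on_halfspace[OF assms(1) _ Imz] by metis
  have "u k = 0" if "s * k $ j \<ge> N" for k
    using eigenvalue_interior[OF u(1) eig, of k] small[OF that] not_interior by force
  moreover have "J0 u k = (z - d k) * u k" for k
    using fun_cong[OF eig, of k] by (simp add: jacobi_def algebra_simps)
  ultimately have "u k = 0" for k using unique_continuation_halfspace[of u "\<lambda>k. z - d k" s N j] s by blast
  with u(2) show False by auto
qed

end
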